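(* Let $k\ge 2$, let $\epsilon>0$ and let $1\le r<k$. For all sufficiently large $n$ (as a function of $\epsilon$ and $k$), for $T\sim\mathcal{R}(n,k)$ the probability that there exist a permutation $\pi$ of $V(T)$, a perfect $r$-set $P$, a subset $R\subseteq P$ with $|R|\ge\epsilon n$ and a subset $S\subseteq A_{r+1}$ with $|S|\ge \epsilon n$ such that the event $X(T,\pi,P,R,S)$ occurs, is at most $\frac{1}{kn}$.
   Context: $\mathcal{R}(n,k)$ is the probability space of $k$-partite tournaments with vertex classes $A_1,\ldots,A_k$ of size $n$ each, every edge between distinct classes oriented independently and uniformly at random. For a permutation (bijection) $\pi:V(T)\to\{1,\ldots,kn\}$, $L_\pi(T)$ is the spanning subgraph of $T$ consisting of all edges $(u,v)\in E(T)$ with $\pi(u)<\pi(v)$, viewed as undirected. For $1\le r\le k$, a perfect $r$-set is a set $P$ of $n$ pairwise disjoint $r$-tuples $(a_1,\ldots,a_r)$ with $a_i\in A_i$ for each $i$. For $1\le r<k$, a perfect $r$-set $P$ and $\pi$, $L_\pi(P,T)$ is the bipartite graph with parts $P$ and $A_{r+1}$ in which $p=(a_1,\ldots,a_r)\in P$ and $v\in A_{r+1}$ are adjacent iff $\{v,a_i\}$ is an edge of $L_\pi(T)$ for every $i=1,\ldots,r$. For $R\subseteq P$ and $S\subseteq A_{r+1}$, $X(T,\pi,P,R,S)$ is the event that $L_\pi(P,T)$ has fewer than $|R||S|/2^{r+1}$ edges between $R$ and $S$. *)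

theory Defs
  imports Complex_Main
begin

definition vclass :: "nat \<Rightarrow> nat \<Rightarrow> (nat \<times> nat) set" where
  "vclass n i = {(i, j) | j. j < n}"

definition verts :: "nat \<Rightarrow> nat \<Rightarrow> (nat \<times> nat) set" where
  "verts n k = (\<Union>i\<in>{1..k}. vclass n i)"

definition is_kpart_tournament :: "nat \<Rightarrow> nat \<Rightarrow> ((nat \<times> nat) \<times> (nat \<times> nat)) set \<Rightarrow> bool" where
  "is_kpart_tournament n k T \<longleftrightarrow>
     T \<subseteq> {(u, v). u \<in> verts n k \<and> v \<in> verts n k \<and> fst u \<noteq> fst v} \<and>
     (\<forall>u\<in>verts n k. \<forall>v\<in>verts n k. fst u \<noteq> fst v \<longrightarrow> ((u, v) \<in> T \<longleftrightarrow> (v, u) \<notin> T))"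

definition tournaments :: "nat \<Rightarrow> nat \<Rightarrow> ((nat \<times> nat) \<times> (nat \<times> nat)) set set" where
  "tournaments n k = {T. is_kpart_tournament n k T}"

text \<open>The probability space R(n,k): independent uniform orientation of every edge is the
  same as the uniform distribution on the finite set of all such tournaments.\<close>

definition prob_R :: "nat \<Rightarrow> nat \<Rightarrow> (((nat \<times> nat) \<times> (nat \<times> nat)) set \<Rightarrow> bool) \<Rightarrow> real" where
  "prob_R n k E = real (card {T \<in> tournaments n k. E T}) / real (card (tournaments n k))"

definition is_perm :: "nat \<Rightarrow> nat \<Rightarrow> ((nat \<times> nat) \<Rightarrow> nat) \<Rightarrow> bool" where
  "is_perm n k \<pi> \<longleftrightarrow> bij_betw \<pi> (verts n k) {1..k * n}"

definition L_edge :: "((nat \<times> nat) \<times> (nat \<times> nat)) set \<Rightarrow> ((nat \<times> nat) \<Rightarrow> nat) \<Rightarrow>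
    nat \<times> nat \<Rightarrow> nat \<times> nat \<Rightarrow> bool" where
  "L_edge T \<pi> u v \<longleftrightarrow> ((u, v) \<in> T \<and> \<pi> u < \<pi> v) \<or> ((v, u) \<in> T \<and> \<pi> v < \<pi> u)"

definition perfect_rset :: "nat \<Rightarrow> nat \<Rightarrow> (nat \<times> nat) list set \<Rightarrow> bool" where
  "perfect_rset n r P \<longleftrightarrow>
     finite P \<and> card P = n \<and>
     (\<forall>p\<in>P. length p = r \<and> (\<forall>i<r. p ! i \<in> vclass n (Suc i))) \<and>
     (\<forall>p\<in>P. \<forall>q\<in>P. p \<noteq> q \<longrightarrow> set p \<inter> set q = {})"

definition LP_adj :: "((nat \<times> nat) \<times> (nat \<times> nat)) set \<Rightarrow> ((nat \<times> nat) \<Rightarrow> nat) \<Rightarrow>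
    (nat \<times> nat) list \<Rightarrow> nat \<times> nat \<Rightarrow> bool" where
  "LP_adj T \<pi> p v \<longleftrightarrow> (\<forall>a\<in>set p. L_edge T \<pi> v a)"

definition event_X :: "nat \<Rightarrow> ((nat \<times> nat) \<times> (nat \<times> nat)) set \<Rightarrow> ((nat \<times> nat) \<Rightarrow> nat) \<Rightarrow>
    (nat \<times> nat) list set \<Rightarrow> (nat \<times> nat) set \<Rightarrow> bool" where
  "event_X r T \<pi> R S \<longleftrightarrow>
     real (card {(p, v). p \<in> R \<and> v \<in> S \<and> LP_adj T \<pi> p v})
       < real (card R) * real (card S) / 2 ^ (r + 1)"

end

theory Submission
  imports Defs "HOL-Library.FuncSet" "HOL-Library.Disjoint_Sets" "HOL-Real_Asymp.Real_Asymp"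
begin

text \<open>
  A tournament is encoded by the orientations of its edges, which are independent fair coins.
  For fixed \<open>\<pi>\<close>, \<open>R\<close> and \<open>S\<close>, a tuple \<open>p \<in> R\<close> and a vertex \<open>v \<in> S\<close> are adjacent in
  \<open>L\<^sub>\<pi>(P,T)\<close> iff each of the at most \<open>r\<close> edges between \<open>v\<close> and the entries of \<open>p\<close> is oriented
  as prescribed by \<open>\<pi>\<close>. The tuples of \<open>P\<close> are disjoint, so these edge sets are disjoint and the
  \<open>|R||S|\<close> adjacencies are independent events of probability at least \<open>2^-r\<close>. An exponential
  moment bound with weight \<open>2^-(number of adjacencies)\<close> shows that fewer than \<open>|R||S|/2^(r+1)\<close>
  of them occur with probability at most \<open>exp(-(1 - ln 2)|R||S|/2^(r+1)) \<le> exp(-c \<epsilon>^2 n^2)\<close>.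
  A union bound over the at most \<open>(kn)^(4kn)\<close> triples \<open>(\<pi>, R, S)\<close> leaves a total probability
  that is eventually below \<open>1/(kn)\<close>.
\<close>

section \<open>Independent blocks of fair coins\<close>

lemma sum_PiE_Un_restrict:
  fixes f g :: "('a \<Rightarrow> 'b) \<Rightarrow> 'c::comm_semiring_0"
  assumes "A \<inter> B = {}"
  shows "(\<Sum>x\<in>PiE (A \<union> B) X. f (restrict x A) * g (restrict x B))
       = (\<Sum>y\<in>PiE A X. f y) * (\<Sum>z\<in>PiE B X. g z)"
proof -
  define merge where "merge y z = (\<lambda>a. if a \<in> A then y a else z a)" for y z :: "'a \<Rightarrow> 'b"
  have restrict_merge: "restrict (merge y z) A = y" "restrict (merge y z) B = z"
    if "y \<in> PiE A X" "z \<in> PiE B X" for y z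
    using that assms by (auto simp: merge_def PiE_def extensional_def fun_eq_iff)
  have merge_in: "merge y z \<in> PiE (A \<union> B) X" if "y \<in> PiE A X" "z \<in> PiE B X" for y z
    using that by (auto simp: merge_def PiE_def extensional_def)
  have merge_restrict: "merge (restrict x A) (restrict x B) = x" if "x \<in> PiE (A \<union> B) X" for x
    using that by (auto simp: merge_def PiE_def extensional_def fun_eq_iff)
  have "(\<Sum>y\<in>PiE A X. f y) * (\<Sum>z\<in>PiE B X. g z) = (\<Sum>(y, z)\<in>PiE A X \<times> PiE B X. f y * g z)"
    by (simp add: sum_product sum.cartesian_product)
  also have "\<dots> = (\<Sum>x\<in>PiE (A \<union> B) X. f (restrict x A) * g (restrict x B))"
    by (rule sum.reindex_bij_witness[of _ "\<lambda>x. (restrict x A, restrict x B)" "case_prod merge"])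
      (auto simp: restrict_merge merge_restrict intro!: merge_in)
  finally show ?thesis ..
qed

lemma sum_PiE_prod_restrict_disjoint:
  fixes h :: "'j \<Rightarrow> ('a \<Rightarrow> 'b) \<Rightarrow> 'c::comm_semiring_1"
  assumes "finite J" "\<And>j. j \<in> J \<Longrightarrow> D j \<subseteq> E" "disjoint_family_on D J"
  shows "(\<Sum>x\<in>PiE E X. \<Prod>j\<in>J. h j (restrict x (D j)))
       = of_nat (card (PiE (E - (\<Union>j\<in>J. D j)) X)) * (\<Prod>j\<in>J. \<Sum>y\<in>PiE (D j) X. h j y)"
  using assms
proof (induction J arbitrary: E rule: finite_induct)
  case empty
  then show ?case by simp
next
  case (insert j0 J)
  define E' where "E' = E - D j0"
  have D_E': "D j \<subseteq> E'" if "j \<in> J" for j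
    using insert.hyps(2) insert.prems that unfolding E'_def disjoint_family_on_def by fastforce
  have E_split: "E = D j0 \<union> E'"
    using insert.prems(1) unfolding E'_def by blast
  have "(\<Sum>x\<in>PiE E X. \<Prod>j\<in>insert j0 J. h j (restrict x (D j)))
      = (\<Sum>x\<in>PiE E X. h j0 (restrict x (D j0)) * (\<lambda>z. \<Prod>j\<in>J. h j (restrict z (D j))) (restrict x E'))"
    using insert.hyps D_E'
    by (intro sum.cong refl) (auto simp: Int_absorb1 Int_absorb2 intro!: prod.cong simp del: restrict_apply)
  also have "\<dots> = (\<Sum>x\<in>PiE (D j0 \<union> E') X. h j0 (restrict x (D j0)) *
           (\<lambda>z. \<Prod>j\<in>J. h j (restrict z (D j))) (restrict x E'))"
    using E_split by simp
  also have "\<dots> = (\<Sum>y\<in>PiE (D j0) X. h j0 y) * (\<Sum>z\<in>PiE E' X. \<Prod>j\<in>J. h j (restrict z (D j)))"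
    by (rule sum_PiE_Un_restrict) (auto simp: E'_def)
  also have "(\<Sum>z\<in>PiE E' X. \<Prod>j\<in>J. h j (restrict z (D j)))
      = of_nat (card (PiE (E' - (\<Union>j\<in>J. D j)) X)) * (\<Prod>j\<in>J. \<Sum>y\<in>PiE (D j) X. h j y)"
    using insert.prems(2) D_E' by (intro insert.IH) (auto intro: disjoint_family_on_mono)
  also have "E' - (\<Union>j\<in>J. D j) = E - (\<Union>j\<in>insert j0 J. D j)"
    unfolding E'_def by auto
  finally show ?case
    using insert.hyps by (simp add: ac_simps)
qed

lemma card_PiE_bool_block_prod:
  assumes "finite J" "finite E" "\<And>j. j \<in> J \<Longrightarrow> D j \<subseteq> E" "disjoint_family_on D J"
  shows "card (PiE E (\<lambda>_. UNIV::bool set))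
       = card (PiE (E - (\<Union>j\<in>J. D j)) (\<lambda>_. UNIV::bool set)) * (\<Prod>j\<in>J. 2 ^ card (D j))"
proof -
  have "card (PiE E (\<lambda>_. UNIV::bool set)) = (\<Sum>b\<in>PiE E (\<lambda>_. UNIV::bool set). \<Prod>j\<in>J. 1::nat)"
    by simp
  also have "\<dots> = card (PiE (E - (\<Union>j\<in>J. D j)) (\<lambda>_. UNIV::bool set))
      * (\<Prod>j\<in>J. \<Sum>y\<in>PiE (D j) (\<lambda>_. UNIV::bool set). 1)"
    using sum_PiE_prod_restrict_disjoint[OF assms(1,3,4), of "\<lambda>_ _. 1::nat" "\<lambda>_. UNIV::bool set"]
    by simp
  also have "(\<Prod>j\<in>J. \<Sum>y\<in>PiE (D j) (\<lambda>_. UNIV::bool set). 1::nat) = (\<Prod>j\<in>J. 2 ^ card (D j))"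
    using assms(2,3) by (intro prod.cong) (simp_all add: card_PiE rev_finite_subset)
  finally show ?thesis .
qed

lemma sum_PiE_half_power_block_matches:
  fixes D :: "'j \<Rightarrow> 'a set" and d :: "'j \<Rightarrow> 'a \<Rightarrow> bool"
  assumes "finite J" "finite E" "\<And>j. j \<in> J \<Longrightarrow> D j \<subseteq> E" "disjoint_family_on D J"
  shows "(\<Sum>b\<in>PiE E (\<lambda>_. UNIV). (1/2::real) ^ card {j\<in>J. \<forall>x\<in>D j. b x = d j x})
       = real (card (PiE E (\<lambda>_. UNIV::bool set))) * (\<Prod>j\<in>J. 1 - 1 / 2 ^ (card (D j) + 1))"
proof -
  define h where "h j y = (if \<forall>x\<in>D j. y x = d j x then 1/2 else 1::real)" for j y
  have weight: "(1/2::real) ^ card {j\<in>J. \<forall>x\<in>D j. b x = d j x} = (\<Prod>j\<in>J. h j (restrict b (D j)))" for b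
    using assms(1) by (simp add: h_def prod.If_cases Int_def)
  have block: "(\<Sum>y\<in>PiE (D j) (\<lambda>_. UNIV). h j y) = 2 ^ card (D j) * (1 - 1 / 2 ^ (card (D j) + 1))"
    if "j \<in> J" for j
  proof -
    define Y where "Y = PiE (D j) (\<lambda>_. UNIV::bool set)"
    define y0 where "y0 = restrict (d j) (D j)"
    have fin: "finite (D j)" using assms(2,3) that by (meson finite_subset)
    have y0: "y0 \<in> Y" "h j y0 = 1/2" by (simp_all add: Y_def y0_def h_def)
    have others: "h j y = 1" if "y \<in> Y - {y0}" for y
    proof -
      have "y \<noteq> restrict (d j) (D j)" "y \<in> extensional (D j)"
        using that unfolding Y_def y0_def by (blast, simp add: PiE_iff)
      then have "\<not> (\<forall>x\<in>D j. y x = d j x)"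
        using extensionalityI[of y "D j" "restrict (d j) (D j)"] by auto
      then show ?thesis by (simp add: h_def)
    qed
    have "(\<Sum>y\<in>Y. h j y) = h j y0 + (\<Sum>y\<in>Y - {y0}. h j y)"
      using fin y0(1) by (simp add: Y_def finite_PiE sum.remove)
    also have "\<dots> = 1/2 + (2 ^ card (D j) - 1)"
      using fin y0 others by (simp add: Y_def finite_PiE card_PiE card_Diff_singleton)
    also have "\<dots> = 2 ^ card (D j) * (1 - 1 / 2 ^ (card (D j) + 1))"
      by (simp add: right_diff_distrib)
    finally show ?thesis
      unfolding Y_def .
  qed
  have "(\<Sum>b\<in>PiE E (\<lambda>_. UNIV). (1/2::real) ^ card {j\<in>J. \<forall>x\<in>D j. b x = d j x})
      = real (card (PiE (E - (\<Union>j\<in>J. D j)) (\<lambda>_. UNIV::bool set)))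
        * (\<Prod>j\<in>J. 2 ^ card (D j) * (1 - 1 / 2 ^ (card (D j) + 1)))"
    unfolding weight using sum_PiE_prod_restrict_disjoint[OF assms(1,3,4), of h] block
    by simp
  also have "\<dots> = real (card (PiE E (\<lambda>_. UNIV::bool set))) * (\<Prod>j\<in>J. 1 - 1 / 2 ^ (card (D j) + 1))"
    by (simp add: card_PiE_bool_block_prod[OF assms] prod.distrib)
  finally show ?thesis .
qed

lemma card_few_block_matches_le:
  fixes D :: "'j \<Rightarrow> 'a set" and d :: "'j \<Rightarrow> 'a \<Rightarrow> bool"
  assumes "finite J" "finite E" "\<And>j. j \<in> J \<Longrightarrow> D j \<subseteq> E" "disjoint_family_on D J"
    and "\<And>j. j \<in> J \<Longrightarrow> card (D j) \<le> r"
  shows "real (card {b \<in> PiE E (\<lambda>_. UNIV).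
            real (card {j\<in>J. \<forall>x\<in>D j. b x = d j x}) < real (card J) / 2 ^ (r + 1)})
       \<le> real (card (PiE E (\<lambda>_. UNIV::bool set))) * exp (- ((1 - ln 2) / 2 ^ (r + 1)) * real (card J))"
proof -
  define F where "F = PiE E (\<lambda>_. UNIV::bool set)"
  define matches where "matches b = card {j\<in>J. \<forall>x\<in>D j. b x = d j x}" for b
  define t where "t = real (card J) / 2 ^ (r + 1)"
  define Bad where "Bad = {b \<in> F. real (matches b) < t}"
  have half_power: "(1/2::real) ^ m = exp (- ln 2 * real m)" for m
    by (simp add: exp_minus exp_of_nat_mult mult.commute power_one_over inverse_eq_divide)
  have "(\<Prod>j\<in>J. 1 - 1 / 2 ^ (card (D j) + 1)) \<le> (\<Prod>j\<in>J. 1 - 1 / 2 ^ (r + 1) :: real)"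
  proof (intro prod_mono conjI)
    fix j assume "j \<in> J"
    have "(1::real) \<le> 2 ^ (card (D j) + 1)"
      by (rule one_le_power) simp
    then show "0 \<le> 1 - 1 / (2 ^ (card (D j) + 1) :: real)"
      by simp
    have "(2::real) ^ (card (D j) + 1) \<le> 2 ^ (r + 1)"
      using assms(5) \<open>j \<in> J\<close> by (intro power_increasing) auto
    then show "1 - 1 / 2 ^ (card (D j) + 1) \<le> 1 - 1 / (2 ^ (r + 1) :: real)"
      by (simp add: frac_le)
  qed
  also have "\<dots> = (1 - 1 / 2 ^ (r + 1)) ^ card J"
    by simp
  also have "\<dots> \<le> exp (- 1 / 2 ^ (r + 1)) ^ card J"
    by (intro power_mono) (use exp_ge_add_one_self[of "- 1 / 2 ^ (r + 1)"] one_le_power[of "2::real" "r + 1"] in auto)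
  also have "\<dots> = exp (- t)"
    by (simp add: t_def exp_of_nat_mult[symmetric])
  finally have moment: "(\<Sum>b\<in>F. (1/2::real) ^ matches b) \<le> real (card F) * exp (- t)"
    using sum_PiE_half_power_block_matches[OF assms(1-4), of d]
    unfolding F_def matches_def by (simp add: mult_left_mono)
  \<comment> \<open>Markov's inequality for the weight \<open>(1/2) ^ matches b\<close>\<close>
  have "exp (- ln 2 * t) \<le> (1/2) ^ matches b" if "b \<in> Bad" for b
    using that ln_2_less_1 unfolding half_power Bad_def by auto
  then have "real (card Bad) * exp (- ln 2 * t) \<le> (\<Sum>b\<in>Bad. (1/2::real) ^ matches b)"
    using sum_mono[of Bad "\<lambda>_. exp (- ln 2 * t)"] by simp
  also have "\<dots> \<le> (\<Sum>b\<in>F. (1/2::real) ^ matches b)"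
    by (rule sum_mono2) (auto simp: F_def Bad_def finite_PiE assms(2))
  finally have "real (card Bad) \<le> real (card F) * (exp (- t) / exp (- ln 2 * t))"
    using moment by (simp add: field_simps)
  also have "exp (- t) / exp (- ln 2 * t) = exp (- ((1 - ln 2) / 2 ^ (r + 1)) * real (card J))"
    unfolding t_def exp_diff[symmetric] by (simp add: field_simps)
  finally show ?thesis
    unfolding Bad_def F_def matches_def t_def by simp
qed

section \<open>Tournaments as edge orientations\<close>

lemma mem_vclass: "x \<in> vclass n i \<longleftrightarrow> fst x = i \<and> snd x < n"
  by (cases x) (auto simp: vclass_def)

lemma vclass_eq: "vclass n i = {i} \<times> {..<n}"
  by (auto simp: vclass_def)

lemma finite_vclass: "finite (vclass n i)"
  by (simp add: vclass_eq)

lemma mem_verts: "x \<in> verts n k \<longleftrightarrow> 1 \<le> fst x \<and> fst x \<le> k \<and> snd x < n"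
  by (cases x) (auto simp: verts_def vclass_def)

lemma verts_eq: "verts n k = {1..k} \<times> {..<n}"
  by (auto simp: mem_verts)

lemma finite_verts: "finite (verts n k)"
  by (simp add: verts_eq)

lemma card_verts: "card (verts n k) = k * n"
  by (simp add: verts_eq card_cartesian_product)

lemma verts_mono: "r \<le> k \<Longrightarrow> verts n r \<subseteq> verts n k"
  by (auto simp: mem_verts)

definition forward_pairs :: "nat \<Rightarrow> nat \<Rightarrow> ((nat \<times> nat) \<times> (nat \<times> nat)) set" where
  "forward_pairs n k = {(u, v). u \<in> verts n k \<and> v \<in> verts n k \<and> fst u < fst v}"

definition tournament_of ::
    "nat \<Rightarrow> nat \<Rightarrow> ((nat \<times> nat) \<times> (nat \<times> nat) \<Rightarrow> bool) \<Rightarrow> ((nat \<times> nat) \<times> (nat \<times> nat)) set" where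
  "tournament_of n k b =
     {(u, v). ((u, v) \<in> forward_pairs n k \<and> b (u, v)) \<or> ((v, u) \<in> forward_pairs n k \<and> \<not> b (v, u))}"

lemma finite_forward_pairs: "finite (forward_pairs n k)"
  by (rule finite_subset[of _ "verts n k \<times> verts n k"]) (auto simp: forward_pairs_def finite_verts)

lemma tournament_of_in_tournaments: "tournament_of n k b \<in> tournaments n k"
  by (auto simp: tournaments_def is_kpart_tournament_def tournament_of_def forward_pairs_def mem_verts)

lemma tournament_of_indicator:
  assumes "T \<in> tournaments n k"
  shows "tournament_of n k (\<lambda>e. e \<in> T) = T"
  using assms
  by (auto simp: tournaments_def is_kpart_tournament_def tournament_of_def forward_pairs_def
      nat_neq_iff)

lemma tournament_of_restrict: "tournament_of n k (restrict b (forward_pairs n k)) = tournament_of n k b"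
  by (auto simp: tournament_of_def)

lemma bij_betw_tournament_of:
  "bij_betw (tournament_of n k) (PiE (forward_pairs n k) (\<lambda>_. UNIV)) (tournaments n k)"
proof (rule bij_betwI[where g="\<lambda>T. restrict (\<lambda>e. e \<in> T) (forward_pairs n k)"])
  show "restrict (\<lambda>e. e \<in> tournament_of n k b) (forward_pairs n k) = b"
    if "b \<in> PiE (forward_pairs n k) (\<lambda>_. UNIV)" for b
    using that by (auto simp: tournament_of_def forward_pairs_def PiE_def extensional_def fun_eq_iff)
  show "tournament_of n k (restrict (\<lambda>e. e \<in> T) (forward_pairs n k)) = T"
    if "T \<in> tournaments n k" for T
    using tournament_of_indicator[OF that] by (simp add: tournament_of_restrict)
qed (auto simp: tournament_of_in_tournaments)

lemma finite_tournaments: "finite (tournaments n k)"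
  using bij_betw_finite[OF bij_betw_tournament_of] by (simp add: finite_PiE finite_forward_pairs)

lemma prob_R_eq_orientations:
  "prob_R n k Q = real (card {b \<in> PiE (forward_pairs n k) (\<lambda>_. UNIV). Q (tournament_of n k b)})
      / real (card (PiE (forward_pairs n k) (\<lambda>_. UNIV::bool set)))"
  using bij_betw_same_card[OF bij_betw_tournament_of]
    bij_betw_same_card[OF bij_betw_Collect[OF bij_betw_tournament_of, where Q=Q and P="\<lambda>b. Q (tournament_of n k b)"]]
  by (simp add: prob_R_def)

lemma prob_R_le_sum:
  assumes "finite I" and "\<And>T. T \<in> tournaments n k \<Longrightarrow> Q T \<Longrightarrow> \<exists>i\<in>I. Q' i T"
  shows "prob_R n k Q \<le> (\<Sum>i\<in>I. prob_R n k (Q' i))"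
proof -
  have "{T \<in> tournaments n k. Q T} \<subseteq> (\<Union>i\<in>I. {T \<in> tournaments n k. Q' i T})"
    using assms(2) by blast
  then have "card {T \<in> tournaments n k. Q T} \<le> card (\<Union>i\<in>I. {T \<in> tournaments n k. Q' i T})"
    by (rule card_mono[rotated]) (simp add: assms(1) finite_tournaments)
  also have "\<dots> \<le> (\<Sum>i\<in>I. card {T \<in> tournaments n k. Q' i T})"
    using assms(1) by (rule card_UN_le)
  finally show ?thesis
    unfolding prob_R_def sum_divide_distrib[symmetric] by (simp add: divide_right_mono flip: of_nat_sum)
qed

section \<open>Adjacency in \<open>L\<^sub>\<pi>(P,T)\<close> as agreement on edge blocks\<close>

lemma perfect_rset_entries:
  assumes "perfect_rset n r P" "p \<in> P"
  shows "set p \<subseteq> verts n r"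
proof
  fix a assume "a \<in> set p"
  then obtain i where "i < length p" "a = p ! i"
    by (auto simp: in_set_conv_nth)
  with assms show "a \<in> verts n r"
    by (auto simp: perfect_rset_def mem_vclass mem_verts)
qed

definition tuple_edges :: "(nat \<times> nat) list \<Rightarrow> nat \<times> nat \<Rightarrow> ((nat \<times> nat) \<times> (nat \<times> nat)) set" where
  "tuple_edges p v = (\<lambda>a. (a, v)) ` set p"

lemma card_tuple_edges_le: "card (tuple_edges p v) \<le> length p"
  unfolding tuple_edges_def using card_image_le card_length order_trans by blast

lemma disjoint_family_on_tuple_edges:
  assumes "perfect_rset n r P"
  shows "disjoint_family_on (case_prod tuple_edges) (P \<times> V)"
  using assms unfolding disjoint_family_on_def perfect_rset_def tuple_edges_def by fastforce

lemma tuple_edges_subset_forward_pairs: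
  assumes "perfect_rset n r P" "p \<in> P" "v \<in> vclass n (Suc r)" "r < k"
  shows "tuple_edges p v \<subseteq> forward_pairs n k"
  using perfect_rset_entries[OF assms(1,2)] assms(3,4)
  by (auto simp: tuple_edges_def forward_pairs_def mem_verts mem_vclass)

lemma LP_adj_tournament_of:
  assumes "inj_on \<pi> (verts n k)" "tuple_edges p v \<subseteq> forward_pairs n k"
  shows "LP_adj (tournament_of n k b) \<pi> p v \<longleftrightarrow> (\<forall>e\<in>tuple_edges p v. b e = (\<pi> (fst e) < \<pi> (snd e)))"
proof -
  have "L_edge (tournament_of n k b) \<pi> v a \<longleftrightarrow> b (a, v) = (\<pi> a < \<pi> v)" if "a \<in> set p" for a
  proof -
    have forward: "(a, v) \<in> forward_pairs n k" "(v, a) \<notin> forward_pairs n k"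
      using assms(2) that by (auto simp: tuple_edges_def forward_pairs_def)
    then have "\<pi> a \<noteq> \<pi> v"
      using assms(1) by (auto simp: forward_pairs_def dest: inj_onD)
    with forward show ?thesis
      by (auto simp: L_edge_def tournament_of_def)
  qed
  then show ?thesis
    by (simp add: LP_adj_def tuple_edges_def)
qed

lemma prob_R_event_X_le:
  assumes "inj_on \<pi> (verts n k)" "perfect_rset n r P" "R \<subseteq> P" "S \<subseteq> vclass n (Suc r)" "r < k"
  shows "prob_R n k (\<lambda>T. event_X r T \<pi> R S)
    \<le> exp (- ((1 - ln 2) / 2 ^ (r + 1)) * (real (card R) * real (card S)))"
proof -
  define \<Omega> where "\<Omega> = PiE (forward_pairs n k) (\<lambda>_. UNIV::bool set)"
  define matches where
    "matches b = card {j \<in> R \<times> S. \<forall>e\<in>case_prod tuple_edges j. b e = (\<pi> (fst e) < \<pi> (snd e))}" for b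
  have edges: "tuple_edges p v \<subseteq> forward_pairs n k" if "(p, v) \<in> R \<times> S" for p v
    using that assms(3,4) by (intro tuple_edges_subset_forward_pairs[OF assms(2) _ _ assms(5)]) auto
  have "{(p, v). p \<in> R \<and> v \<in> S \<and> LP_adj (tournament_of n k b) \<pi> p v}
      = {j \<in> R \<times> S. \<forall>e\<in>case_prod tuple_edges j. b e = (\<pi> (fst e) < \<pi> (snd e))}" for b
    using LP_adj_tournament_of[OF assms(1) edges] by auto
  then have event: "event_X r (tournament_of n k b) \<pi> R S \<longleftrightarrow>
      real (matches b) < real (card (R \<times> S)) / 2 ^ (r + 1)" for b
    by (simp add: event_X_def matches_def card_cartesian_product)
  have finite_RS: "finite (R \<times> S)"
    using assms(2-4) finite_subset[OF assms(3)] finite_subset[OF assms(4)]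
    by (simp add: perfect_rset_def finite_vclass)
  have "real (card {b \<in> \<Omega>. real (matches b) < real (card (R \<times> S)) / 2 ^ (r + 1)})
      \<le> real (card \<Omega>) * exp (- ((1 - ln 2) / 2 ^ (r + 1)) * real (card (R \<times> S)))"
    unfolding \<Omega>_def matches_def
  proof (rule card_few_block_matches_le[OF finite_RS finite_forward_pairs])
    show "case_prod tuple_edges j \<subseteq> forward_pairs n k" if "j \<in> R \<times> S" for j
      using edges that by auto
    show "disjoint_family_on (case_prod tuple_edges) (R \<times> S)"
      using assms(3) by (intro disjoint_family_on_mono[OF _ disjoint_family_on_tuple_edges[OF assms(2)]]) auto
    show "card (case_prod tuple_edges j) \<le> r" if j: "j \<in> R \<times> S" for j
    proof -
      obtain p v where "j = (p, v)" "p \<in> P"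
        using j assms(3) by auto
      then show ?thesis
        using card_tuple_edges_le[of p v] assms(2) by (simp add: perfect_rset_def)
    qed
  qed
  moreover have "card \<Omega> > 0"
    by (simp add: \<Omega>_def card_gt_0_iff finite_PiE finite_forward_pairs PiE_eq_empty_iff)
  ultimately show ?thesis
    unfolding prob_R_eq_orientations event \<Omega>_def[symmetric]
    by (simp add: divide_le_eq card_cartesian_product mult.commute)
qed

section \<open>The union bound\<close>

lemma eventually_power_exp_le_inverse:
  fixes k :: nat and a :: real
  assumes "k > 0" "a > 0"
  shows "eventually (\<lambda>n. real (k * n) ^ (4 * (k * n)) * exp (- a * real n ^ 2) \<le> 1 / (real k * real n))
           at_top"
proof -
  have "((\<lambda>n. exp (4 * real (k * n) * ln (real (k * n)) + ln (real (k * n)) - a * real n ^ 2)) \<longlongrightarrow> 0)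
      at_top"
    using assms by real_asymp
  then have "eventually (\<lambda>n. exp (4 * real (k * n) * ln (real (k * n)) + ln (real (k * n)) - a * real n ^ 2) < 1)
      at_top"
    by (rule order_tendstoD) simp
  moreover have "eventually (\<lambda>n::nat. n \<ge> 1) at_top"
    by (rule eventually_ge_at_top)
  ultimately show ?thesis
  proof eventually_elim
    case (elim n)
    define K where "K = real (k * n)"
    have K: "K > 0"
      using assms elim(2) by (simp add: K_def)
    have "K ^ (4 * (k * n)) = exp (4 * K * ln K)"
      using K assms(1) elim(2) by (simp add: powr_def K_def flip: powr_realpow)
    then have "K ^ (4 * (k * n)) * exp (- a * real n ^ 2) * K
        = exp (4 * K * ln K) * exp (- a * real n ^ 2) * exp (ln K)"
      using K by simp
    also have "\<dots> = exp (4 * K * ln K + ln K - a * real n ^ 2)"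
      by (simp add: algebra_simps flip: exp_add)
    finally have "K ^ (4 * (k * n)) * exp (- a * real n ^ 2) * K < 1"
      using elim(1) by (simp add: K_def)
    with K show ?case
      by (simp add: K_def pos_le_divide_eq)
  qed
qed

lemma card_perfect_rsets_le:
  "finite {P. perfect_rset n r P} \<and> card {P. perfect_rset n r P} \<le> (r * n) ^ (r * n)"
proof -
  define L where "L = {p. set p \<subseteq> verts n r \<and> length p = r}"
  have finite_L: "finite L" and card_L: "card L = (r * n) ^ r"
    unfolding L_def by (simp_all add: finite_lists_length_eq card_lists_length_eq finite_verts card_verts)
  have subset: "{P. perfect_rset n r P} \<subseteq> {P. P \<subseteq> L \<and> card P = n}"
    using perfect_rset_entries by (auto simp: L_def perfect_rset_def)
  have "card {P. P \<subseteq> L \<and> card P = n} = card L choose n"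
    by (rule n_subsets[OF finite_L])
  also have "\<dots> \<le> card L ^ n"
    by (cases "n \<le> card L") (simp_all add: binomial_le_pow binomial_eq_0)
  finally show ?thesis
    using card_mono[OF _ subset] finite_subset[OF subset] finite_L
    by (simp add: card_L power_mult)
qed

lemma self_power_mono:
  fixes a b :: nat
  assumes "a \<le> b"
  shows "a ^ a \<le> b ^ b"
proof (cases "a = 0")
  case False
  then have "a ^ a \<le> b ^ a"
    by (simp add: assms power_mono)
  also have "\<dots> \<le> b ^ b"
    using False assms by (intro power_increasing) auto
  finally show ?thesis .
qed (cases b, simp_all add: Suc_le_eq)

text \<open>Restricting \<open>\<pi>\<close> to the vertex set makes the family of relevant permutations finite.\<close>

definition witness_space ::
    "nat \<Rightarrow> nat \<Rightarrow> nat \<Rightarrow> ((nat \<times> nat \<Rightarrow> nat) \<times> (nat \<times> nat) list set \<times> (nat \<times> nat) set) set" where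
  "witness_space n k r =
     (verts n k \<rightarrow>\<^sub>E {1..k * n}) \<times> (\<Union>P\<in>{P. perfect_rset n r P}. Pow P) \<times> Pow (vclass n (Suc r))"

lemma card_witness_space_le:
  assumes "2 \<le> k" "r < k"
  shows "finite (witness_space n k r) \<and> card (witness_space n k r) \<le> (k * n) ^ (4 * (k * n))"
proof -
  define K where "K = k * n"
  define U where "U = (\<Union>P\<in>{P. perfect_rset n r P}. Pow P)"
  have two_power: "2 ^ n \<le> K ^ K"
  proof (cases "n = 0")
    case False
    then have "2 \<le> K"
      using assms(1) by (cases n) (simp_all add: K_def)
    then have "2 ^ n \<le> K ^ n"
      by (rule power_mono) simp
    also have "\<dots> \<le> K ^ K"
      using False assms(1) by (intro power_increasing) (auto simp: K_def)
    finally show ?thesis .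
  qed (simp add: K_def)
  have finite_U: "finite U"
    using card_perfect_rsets_le by (auto simp: U_def perfect_rset_def)
  have "card U \<le> card {P. perfect_rset n r P} * 2 ^ n"
    using card_perfect_rsets_le card_UN_le[of "{P. perfect_rset n r P}" Pow]
    by (auto simp: U_def perfect_rset_def card_Pow)
  also have "\<dots> \<le> K ^ K * K ^ K"
    using card_perfect_rsets_le[of n r] self_power_mono[of "r * n" K] two_power assms(2)
    by (intro mult_le_mono) (auto simp: K_def)
  finally have card_U: "card U \<le> K ^ K * K ^ K" .
  have "card (witness_space n k r) = K ^ K * card U * 2 ^ n"
    by (simp add: witness_space_def U_def K_def card_cartesian_product card_PiE finite_verts card_verts card_Pow finite_vclass vclass_eq)
  also have "\<dots> \<le> K ^ K * (K ^ K * K ^ K) * K ^ K"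
    using card_U two_power by (intro mult_le_mono) auto
  also have "\<dots> = (K ^ K) ^ 4"
    by (simp add: power4_eq_xxxx ac_simps)
  also have "\<dots> = K ^ (4 * K)"
    by (metis mult.commute power_mult)
  finally show ?thesis
    using finite_U by (simp add: witness_space_def U_def K_def finite_PiE finite_verts finite_vclass)
qed

lemma event_X_restrict_verts:
  assumes "perfect_rset n r P" "R \<subseteq> P" "S \<subseteq> vclass n (Suc r)" "r < k"
  shows "event_X r T (restrict \<pi> (verts n k)) R S \<longleftrightarrow> event_X r T \<pi> R S"
proof -
  have "LP_adj T (restrict \<pi> (verts n k)) p v \<longleftrightarrow> LP_adj T \<pi> p v" if "p \<in> R" "v \<in> S" for p v
  proof -
    have "set p \<subseteq> verts n k"
      using that assms(1,2,4) perfect_rset_entries verts_mono[of r k] by fastforce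
    moreover have "v \<in> verts n k"
      using that assms(3,4) by (auto simp: mem_vclass mem_verts)
    ultimately show ?thesis
      by (auto simp: LP_adj_def L_edge_def)
  qed
  then have "{(p, v). p \<in> R \<and> v \<in> S \<and> LP_adj T (restrict \<pi> (verts n k)) p v}
      = {(p, v). p \<in> R \<and> v \<in> S \<and> LP_adj T \<pi> p v}"
    by auto
  then show ?thesis
    by (simp add: event_X_def)
qed

lemma prob_R_event_X_large_le:
  fixes \<epsilon> :: real
  assumes "inj_on \<pi> (verts n k)" "perfect_rset n r P" "R \<subseteq> P" "S \<subseteq> vclass n (Suc r)" "r < k"
    and "0 \<le> \<epsilon>" "\<epsilon> * real n \<le> card R" "\<epsilon> * real n \<le> card S"
  shows "prob_R n k (\<lambda>T. event_X r T \<pi> R S) \<le> exp (- ((1 - ln 2) / 2 ^ (r + 1) * \<epsilon> ^ 2) * real n ^ 2)"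
proof -
  define c :: real where "c = (1 - ln 2) / 2 ^ (r + 1)"
  have "(\<epsilon> * real n) * (\<epsilon> * real n) \<le> real (card R) * real (card S)"
    using assms(6-8) by (intro mult_mono) auto
  moreover have "0 \<le> c"
    using ln_2_less_1 by (simp add: c_def)
  ultimately have "c * \<epsilon> ^ 2 * real n ^ 2 \<le> c * (real (card R) * real (card S))"
    using mult_left_mono by (fastforce simp: power2_eq_square ac_simps)
  then have "exp (- c * (real (card R) * real (card S))) \<le> exp (- (c * \<epsilon> ^ 2) * real n ^ 2)"
    by simp
  with prob_R_event_X_le[OF assms(1-5)] show ?thesis
    unfolding c_def by (rule order_trans)
qed

lemma prob_R_exists_event_X_le:
  fixes \<epsilon> :: real
  assumes "2 \<le> k" "r < k" "0 \<le> \<epsilon>"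
  shows "prob_R n k (\<lambda>T. \<exists>\<pi> P R S.
        is_perm n k \<pi> \<and> perfect_rset n r P \<and>
        R \<subseteq> P \<and> real (card R) \<ge> \<epsilon> * real n \<and>
        S \<subseteq> vclass n (Suc r) \<and> real (card S) \<ge> \<epsilon> * real n \<and>
        event_X r T \<pi> R S)
    \<le> real (k * n) ^ (4 * (k * n)) * exp (- ((1 - ln 2) / 2 ^ (r + 1) * \<epsilon> ^ 2) * real n ^ 2)"
    (is "prob_R n k ?event \<le> _ * ?bound")
proof -
  define I where
    "I = {(\<pi>, R, S) \<in> witness_space n k r. inj_on \<pi> (verts n k) \<and> \<epsilon> * real n \<le> card R \<and> \<epsilon> * real n \<le> card S}"
  have space: "finite (witness_space n k r)" "card (witness_space n k r) \<le> (k * n) ^ (4 * (k * n))"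
    using card_witness_space_le[OF assms(1,2)] by simp_all
  have I_W: "I \<subseteq> witness_space n k r"
    by (auto simp: I_def)
  have "prob_R n k ?event \<le> (\<Sum>i\<in>I. prob_R n k (\<lambda>T. case i of (\<pi>, R, S) \<Rightarrow> event_X r T \<pi> R S))"
  proof (rule prob_R_le_sum)
    show "finite I"
      using space(1) I_W by (rule finite_subset[rotated])
    fix T assume "?event T"
    then obtain \<pi> P R S where \<pi>: "is_perm n k \<pi>" and P: "perfect_rset n r P" "R \<subseteq> P"
      and S: "S \<subseteq> vclass n (Suc r)" and large: "\<epsilon> * real n \<le> card R" "\<epsilon> * real n \<le> card S"
      and X: "event_X r T \<pi> R S"
      by blast
    have "restrict \<pi> (verts n k) \<in> verts n k \<rightarrow>\<^sub>E {1..k * n}" "inj_on \<pi> (verts n k)"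
      using \<pi> by (auto simp: is_perm_def bij_betw_def)
    then have "(restrict \<pi> (verts n k), R, S) \<in> I"
      using P S large by (auto simp: I_def witness_space_def)
    moreover have "event_X r T (restrict \<pi> (verts n k)) R S"
      using X event_X_restrict_verts[OF P S assms(2)] by simp
    ultimately show "\<exists>i\<in>I. case i of (\<pi>, R, S) \<Rightarrow> event_X r T \<pi> R S"
      by blast
  qed
  also have "\<dots> \<le> (\<Sum>i\<in>I. ?bound)"
  proof (rule sum_mono)
    fix i assume "i \<in> I"
    then obtain \<pi> R S P where "i = (\<pi>, R, S)" "inj_on \<pi> (verts n k)"
      "perfect_rset n r P" "R \<subseteq> P" "S \<subseteq> vclass n (Suc r)" "\<epsilon> * real n \<le> card R" "\<epsilon> * real n \<le> card S"
      by (auto simp: I_def witness_space_def)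
    then show "prob_R n k (\<lambda>T. case i of (\<pi>, R, S) \<Rightarrow> event_X r T \<pi> R S) \<le> ?bound"
      using prob_R_event_X_large_le assms(2,3) by simp
  qed
  also have "\<dots> \<le> real (card (witness_space n k r)) * ?bound"
    using card_mono[OF space(1) I_W] by simp
  also have "\<dots> \<le> real (k * n) ^ (4 * (k * n)) * ?bound"
    using of_nat_mono[OF space(2), where 'a=real] by (intro mult_right_mono) simp_all
  finally show ?thesis .
qed

theorem lemma4p4:
  fixes k r :: nat and \<epsilon> :: real
  assumes "k \<ge> 2" and "\<epsilon> > 0" and "1 \<le> r" and "r < k"
  shows "\<exists>N. \<forall>n\<ge>N.
    prob_R n k (\<lambda>T. \<exists>\<pi> P R S.
        is_perm n k \<pi> \<and> perfect_rset n r P \<and>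
        R \<subseteq> P \<and> real (card R) \<ge> \<epsilon> * real n \<and>
        S \<subseteq> vclass n (Suc r) \<and> real (card S) \<ge> \<epsilon> * real n \<and>
        event_X r T \<pi> R S)
    \<le> 1 / (real k * real n)"
proof -
  have "(1 - ln 2) / 2 ^ (r + 1) * \<epsilon> ^ 2 > 0"
    using assms(2) ln_2_less_1 by simp
  then have "eventually (\<lambda>n. real (k * n) ^ (4 * (k * n)) * exp (- ((1 - ln 2) / 2 ^ (r + 1) * \<epsilon> ^ 2) * real n ^ 2)
      \<le> 1 / (real k * real n)) at_top"
    using assms(1) by (intro eventually_power_exp_le_inverse) auto
  then show ?thesis
    unfolding eventually_at_top_linorder
    using prob_R_exists_event_X_le[OF assms(1,4) less_imp_le[OF assms(2)]] order_trans by blast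
qed

end
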